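(* Let $n \leq 9$ and let $G$ be a connected $n$-vertex graph with maximum degree at most $3$ that is not isomorphic to any of $C_4$, $C_4'$, $K_4$. Then $\iota(G, C_4) \leq 1$.
   Context: All graphs are finite and simple. For $D \subseteq V(G)$, $N[D]$ is the closed neighbourhood of $D$ and $G - N[D]$ the subgraph induced by $V(G)\setminus N[D]$. A set $D \subseteq V(G)$ is a $C_4$-isolating set of $G$ if $G - N[D]$ contains no subgraph isomorphic to the $4$-cycle $C_4$; $\iota(G, C_4)$ is the minimum size of such a set. $C_4'$ is the diamond graph on $\{1,2,3,4\}$ with edges $12,23,34,41,13$. *)

theory Defs
  imports Main
begin

definition simple_graph :: "'a set \<Rightarrow> ('a \<Rightarrow> 'a \<Rightarrow> bool) \<Rightarrow> bool" where
  "simple_graph V E \<longleftrightarrow> finite V \<and> (\<forall>x y. E x y \<longrightarrow> x \<in> V \<and> y \<in> V)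
     \<and> (\<forall>x y. E x y \<longrightarrow> E y x) \<and> (\<forall>x. \<not> E x x)"

definition connected_graph :: "'a set \<Rightarrow> ('a \<Rightarrow> 'a \<Rightarrow> bool) \<Rightarrow> bool" where
  "connected_graph V E \<longleftrightarrow> (\<forall>x\<in>V. \<forall>y\<in>V. E\<^sup>*\<^sup>* x y)"

definition degree :: "('a \<Rightarrow> 'a \<Rightarrow> bool) \<Rightarrow> 'a \<Rightarrow> nat" where
  "degree E v = card {u. E v u}"

definition max_degree_le :: "'a set \<Rightarrow> ('a \<Rightarrow> 'a \<Rightarrow> bool) \<Rightarrow> nat \<Rightarrow> bool" where
  "max_degree_le V E k \<longleftrightarrow> (\<forall>v\<in>V. degree E v \<le> k)"

definition graph_iso :: "'a set \<Rightarrow> ('a \<Rightarrow> 'a \<Rightarrow> bool) \<Rightarrow> 'b set \<Rightarrow> ('b \<Rightarrow> 'b \<Rightarrow> bool) \<Rightarrow> bool" where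
  "graph_iso V E W F \<longleftrightarrow> (\<exists>f. bij_betw f V W \<and> (\<forall>x\<in>V. \<forall>y\<in>V. E x y \<longleftrightarrow> F (f x) (f y)))"

definition C4_edges :: "nat \<Rightarrow> nat \<Rightarrow> bool" where
  "C4_edges x y \<longleftrightarrow> {x, y} \<in> {{1,2},{2,3},{3,4},{4,1}}"

definition diamond_edges :: "nat \<Rightarrow> nat \<Rightarrow> bool" where
  "diamond_edges x y \<longleftrightarrow> {x, y} \<in> {{1,2},{2,3},{3,4},{4,1},{1,3}}"

definition K4_edges :: "nat \<Rightarrow> nat \<Rightarrow> bool" where
  "K4_edges x y \<longleftrightarrow> x \<in> {1..4} \<and> y \<in> {1..4} \<and> x \<noteq> y"

definition closed_nbhd :: "'a set \<Rightarrow> ('a \<Rightarrow> 'a \<Rightarrow> bool) \<Rightarrow> 'a set \<Rightarrow> 'a set" where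
  "closed_nbhd V E D = D \<union> {v \<in> V. \<exists>d\<in>D. E d v}"

definition contains_C4 :: "'a set \<Rightarrow> ('a \<Rightarrow> 'a \<Rightarrow> bool) \<Rightarrow> bool" where
  "contains_C4 S E \<longleftrightarrow> (\<exists>a\<in>S. \<exists>b\<in>S. \<exists>c\<in>S. \<exists>d\<in>S. distinct [a,b,c,d]
      \<and> E a b \<and> E b c \<and> E c d \<and> E d a)"

definition C4_isolating :: "'a set \<Rightarrow> ('a \<Rightarrow> 'a \<Rightarrow> bool) \<Rightarrow> 'a set \<Rightarrow> bool" where
  "C4_isolating V E D \<longleftrightarrow> D \<subseteq> V \<and> \<not> contains_C4 (V - closed_nbhd V E D) E"

definition iota_C4 :: "'a set \<Rightarrow> ('a \<Rightarrow> 'a \<Rightarrow> bool) \<Rightarrow> nat" where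
  "iota_C4 V E = (LEAST k. \<exists>D. C4_isolating V E D \<and> card D = k)"

end

(*
  Suppose no single vertex isolates all 4-cycles and let Q be a 4-cycle. For x on Q, the
  4-cycle surviving outside N[x] avoids Q: the only vertex of Q outside N[x] is the one
  opposite to x, which already has two neighbours in N[x] and so, having degree at most 3,
  cannot lie on a cycle outside N[x]. This yields a second 4-cycle R disjoint from Q, and at
  most one further vertex w. An edge xy between Q and R would push the 4-cycle outside N[x]
  into (R - y) + w, so w would have two neighbours on R and, symmetrically, two on Q: degree 4.
  Hence, by connectivity, w is adjacent to both Q and R, and then everything outside N[w]
  splits into two sets of at most 3 vertices with no edges between them, which carry no 4-cycle.
*)
theory Submission
  imports Defs
begin

definition C4_on :: "('a \<Rightarrow> 'a \<Rightarrow> bool) \<Rightarrow> 'a set \<Rightarrow> bool" where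
  "C4_on E Q \<longleftrightarrow> (\<exists>a b c d. Q = {a, b, c, d} \<and> distinct [a, b, c, d]
      \<and> E a b \<and> E b c \<and> E c d \<and> E d a)"

lemma contains_C4_iff_C4_on: "contains_C4 S E \<longleftrightarrow> (\<exists>Q \<subseteq> S. C4_on E Q)"
proof
  assume "contains_C4 S E"
  then obtain a b c d where "{a, b, c, d} \<subseteq> S" "distinct [a, b, c, d]"
      "E a b" "E b c" "E c d" "E d a"
    unfolding contains_C4_def by blast
  then show "\<exists>Q \<subseteq> S. C4_on E Q"
    unfolding C4_on_def by blast
next
  assume "\<exists>Q \<subseteq> S. C4_on E Q"
  then show "contains_C4 S E"
    unfolding C4_on_def contains_C4_def by blast
qed

lemma contains_C4_mono: "contains_C4 S E \<Longrightarrow> S \<subseteq> S' \<Longrightarrow> contains_C4 S' E"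
  unfolding contains_C4_iff_C4_on by blast

lemma C4_on_card: "C4_on E Q \<Longrightarrow> finite Q \<and> card Q = 4"
  unfolding C4_on_def by auto

lemma contains_C4_card_ge_4:
  assumes "contains_C4 S E" "finite S"
  shows "4 \<le> card S"
proof -
  obtain Q where "Q \<subseteq> S" "C4_on E Q"
    using assms(1) unfolding contains_C4_iff_C4_on by blast
  then show ?thesis using C4_on_card card_mono[OF assms(2)] by metis
qed

lemma C4_on_two_neighbours:
  assumes "symp E" "C4_on E Q" "x \<in> Q"
  shows "\<exists>y\<in>Q. \<exists>z\<in>Q. y \<noteq> z \<and> y \<noteq> x \<and> z \<noteq> x \<and> E x y \<and> E x z"
  using assms unfolding C4_on_def by (auto dest: sympD)

lemma C4_on_common_neighbours:
  assumes "symp E" "C4_on E Q" "x \<in> Q" "c \<in> Q" "c \<noteq> x" "\<not> E x c"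
  shows "\<exists>b d. b \<noteq> d \<and> E x b \<and> E x d \<and> E c b \<and> E c d"
  using assms unfolding C4_on_def by (auto dest: sympD)

lemma contains_C4_insert:
  assumes "symp E" "contains_C4 (insert w A) E" "\<not> contains_C4 A E"
  shows "\<exists>u1\<in>A. \<exists>u2\<in>A. u1 \<noteq> u2 \<and> E w u1 \<and> E w u2"
proof -
  obtain Q where Q: "Q \<subseteq> insert w A" "C4_on E Q"
    using assms(2) unfolding contains_C4_iff_C4_on by blast
  have "w \<in> Q"
    using Q assms(3) unfolding contains_C4_iff_C4_on by blast
  then show ?thesis
    using C4_on_two_neighbours[OF assms(1) Q(2)] Q(1) by blast
qed

lemma contains_C4_Un_no_edges:
  assumes "symp E" "contains_C4 (A \<union> B) E" "\<forall>x\<in>A. \<forall>y\<in>B. \<not> E x y"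
  shows "contains_C4 A E \<or> contains_C4 B E"
proof -
  obtain Q where Q: "Q \<subseteq> A \<union> B" "C4_on E Q"
    using assms(2) unfolding contains_C4_iff_C4_on by blast
  then obtain a b c d where abcd: "Q = {a, b, c, d}" "E a b" "E b c" "E c d"
    unfolding C4_on_def by blast
  have same_side: "x \<in> A \<longleftrightarrow> y \<in> A" if "E x y" "x \<in> A \<union> B" "y \<in> A \<union> B" for x y
    using assms(1,3) that by (blast dest: sympD)
  have "a \<in> A \<longleftrightarrow> b \<in> A" "b \<in> A \<longleftrightarrow> c \<in> A" "c \<in> A \<longleftrightarrow> d \<in> A"
    using abcd Q(1) same_side by auto
  then have "Q \<subseteq> A \<or> Q \<subseteq> B"
    using abcd(1) Q(1) by (cases "a \<in> A") auto
  then show ?thesis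
    using Q(2) unfolding contains_C4_iff_C4_on by blast
qed

lemma subset_Un_singleton_if_card_le_Suc:
  assumes "finite V" "A \<subseteq> V" "card V \<le> Suc (card A)"
  shows "\<exists>w. V \<subseteq> A \<union> {w}"
proof -
  have "card (V - A) \<le> Suc 0"
    using assms by (simp add: card_Diff_subset finite_subset)
  then have "\<forall>u\<in>V - A. \<forall>v\<in>V - A. u = v"
    using card_le_Suc0_iff_eq[OF finite_Diff[OF assms(1)]] by simp
  then show ?thesis
    by blast
qed

lemma iota_C4_le: "C4_isolating V E D \<Longrightarrow> iota_C4 V E \<le> card D"
  unfolding iota_C4_def by (rule Least_le) blast

locale graph =
  fixes V :: "'a set" and E :: "'a \<Rightarrow> 'a \<Rightarrow> bool"
  assumes simple: "simple_graph V E"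
begin

lemma finite_vertices: "finite V"
  using simple unfolding simple_graph_def by blast

lemma edge_in_vertices: "E x y \<Longrightarrow> x \<in> V \<and> y \<in> V"
  using simple unfolding simple_graph_def by blast

lemma symp_edges: "symp E"
  using simple unfolding simple_graph_def by (blast intro: sympI)

lemma no_loop: "\<not> E x x"
  using simple unfolding simple_graph_def by blast

lemma neighbour_in_closed_nbhd: "E x y \<Longrightarrow> y \<in> closed_nbhd V E {x}"
  using edge_in_vertices unfolding closed_nbhd_def by blast

lemma cut_vertex_has_neighbours_on_both_sides:
  assumes "connected_graph V E" "V \<subseteq> A \<union> B \<union> {w}" "A \<inter> B = {}"
    "a \<in> A \<inter> V" "b \<in> B \<inter> V" "\<forall>x\<in>A. \<forall>y\<in>B. \<not> E x y"
  shows "\<exists>x\<in>A. \<exists>y\<in>B. E x w \<and> E w y"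
proof (rule ccontr)
  assume no_bridge: "\<not> ?thesis"
  have "E\<^sup>*\<^sup>* a b"
    using assms(1,4,5) unfolding connected_graph_def by blast
  then have "b \<in> A \<or> (b = w \<and> (\<exists>x\<in>A. E x w))"
  proof (induction rule: rtranclp_induct)
    case base
    then show ?case using assms(4) by blast
  next
    case (step y z)
    then show ?case
      using assms(2,6) no_bridge edge_in_vertices no_loop by blast
  qed
  then show False
    using assms(3,5,6) by blast
qed

lemma no_C4_outside_closed_nbhd_of_cut_vertex:
  assumes "V \<subseteq> A \<union> B \<union> {w}" "finite A" "card A \<le> 4" "finite B" "card B \<le> 4"
    "a \<in> A" "b \<in> B" "E w a" "E w b" "\<forall>x\<in>A. \<forall>y\<in>B. \<not> E x y"
  shows "\<not> contains_C4 (V - closed_nbhd V E {w}) E"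
proof
  assume "contains_C4 (V - closed_nbhd V E {w}) E"
  moreover have "V - closed_nbhd V E {w} \<subseteq> (A - {a}) \<union> (B - {b})"
    using assms(1,6-9) neighbour_in_closed_nbhd unfolding closed_nbhd_def by blast
  ultimately have "contains_C4 ((A - {a}) \<union> (B - {b})) E"
    by (rule contains_C4_mono)
  then have "contains_C4 (A - {a}) E \<or> contains_C4 (B - {b}) E"
    using contains_C4_Un_no_edges[OF symp_edges] assms(10) by blast
  then show False
    using contains_C4_card_ge_4[of "A - {a}"] contains_C4_card_ge_4[of "B - {b}"] assms(2-7)
    by fastforce
qed

end

locale subcubic_graph = graph +
  assumes subcubic: "max_degree_le V E 3"
begin

lemma no_four_neighbours:
  assumes "distinct [a, b, c, d]" "E w a" "E w b" "E w c" "E w d"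
  shows False
proof -
  have "finite {u. E w u}"
    using finite_vertices edge_in_vertices by (blast intro: rev_finite_subset)
  moreover have "{a, b, c, d} \<subseteq> {u. E w u}"
    using assms by blast
  ultimately have "card {a, b, c, d} \<le> degree E w"
    unfolding degree_def by (rule card_mono)
  moreover have "degree E w \<le> 3"
    using subcubic edge_in_vertices assms(2) unfolding max_degree_le_def by blast
  ultimately show False
    using assms(1) by simp
qed

lemma C4_outside_closed_nbhd_disjoint:
  assumes Q: "C4_on E Q" "x \<in> Q" and S: "C4_on E S" "S \<subseteq> V - closed_nbhd V E {x}"
  shows "S \<inter> Q = {}"
proof (rule ccontr)
  assume "S \<inter> Q \<noteq> {}"
  then obtain c where c: "c \<in> S" "c \<in> Q" by blast
  then have "c \<noteq> x" "\<not> E x c"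
    using S(2) neighbour_in_closed_nbhd unfolding closed_nbhd_def by blast+
  then obtain b d where bd: "b \<noteq> d" "E x b" "E x d" "E c b" "E c d"
    using C4_on_common_neighbours[OF symp_edges Q c(2)] by blast
  obtain y z where yz: "y \<in> S" "z \<in> S" "y \<noteq> z" "E c y" "E c z"
    using C4_on_two_neighbours[OF symp_edges S(1) c(1)] by blast
  have "y \<notin> {b, d}" "z \<notin> {b, d}"
    using yz(1,2) S(2) bd(2,3) neighbour_in_closed_nbhd by blast+
  then show False
    using no_four_neighbours[of b d y z c] bd yz by auto
qed

lemma contains_C4_outside_closed_nbhd_Diff:
  assumes "C4_on E Q" "x \<in> Q" "contains_C4 (V - closed_nbhd V E {x}) E"
  shows "contains_C4 (V - closed_nbhd V E {x} - Q) E"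
proof -
  obtain S where "S \<subseteq> V - closed_nbhd V E {x}" "C4_on E S"
    using assms(3) unfolding contains_C4_iff_C4_on by blast
  moreover from this have "S \<inter> Q = {}"
    using C4_outside_closed_nbhd_disjoint assms(1,2) by blast
  ultimately show ?thesis
    unfolding contains_C4_iff_C4_on by blast
qed

lemma extra_vertex_two_neighbours:
  assumes Q: "C4_on E Q" "x \<in> Q" and far: "contains_C4 (V - closed_nbhd V E {x}) E"
    and cover: "V \<subseteq> Q \<union> R \<union> {w}" and R: "finite R" "card R \<le> 4" "y \<in> R" "E x y"
  shows "\<exists>u1\<in>R. \<exists>u2\<in>R. u1 \<noteq> u2 \<and> E w u1 \<and> E w u2"
proof -
  have "contains_C4 (V - closed_nbhd V E {x} - Q) E"
    using contains_C4_outside_closed_nbhd_Diff[OF Q far] .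
  moreover have "V - closed_nbhd V E {x} - Q \<subseteq> insert w (R - {y})"
    using cover R(4) neighbour_in_closed_nbhd by blast
  ultimately have "contains_C4 (insert w (R - {y})) E"
    by (rule contains_C4_mono)
  moreover have "\<not> contains_C4 (R - {y}) E"
    using contains_C4_card_ge_4[of "R - {y}"] R by fastforce
  ultimately show ?thesis
    using contains_C4_insert[OF symp_edges] by blast
qed

lemma no_edge_between_C4s:
  assumes far: "\<And>v. v \<in> V \<Longrightarrow> contains_C4 (V - closed_nbhd V E {v}) E"
    and Q: "C4_on E Q" and R: "C4_on E R" and "Q \<inter> R = {}" and cover: "V \<subseteq> Q \<union> R \<union> {w}"
  shows "\<forall>x\<in>Q. \<forall>y\<in>R. \<not> E x y"
proof (intro ballI notI)
  fix x y assume xy: "x \<in> Q" "y \<in> R" "E x y"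
  have "x \<in> V" "y \<in> V" "E y x"
    using edge_in_vertices[OF xy(3)] sympD[OF symp_edges xy(3)] by auto
  have cover': "V \<subseteq> R \<union> Q \<union> {w}"
    using cover by blast
  obtain u1 u2 where "u1 \<in> R" "u2 \<in> R" "u1 \<noteq> u2" "E w u1" "E w u2"
    using extra_vertex_two_neighbours[OF Q xy(1) far[OF \<open>x \<in> V\<close>] cover _ _ xy(2,3)]
      C4_on_card[OF R] by auto
  moreover obtain u3 u4 where "u3 \<in> Q" "u4 \<in> Q" "u3 \<noteq> u4" "E w u3" "E w u4"
    using extra_vertex_two_neighbours[OF R xy(2) far[OF \<open>y \<in> V\<close>] cover' _ _ xy(1) \<open>E y x\<close>]
      C4_on_card[OF Q] by auto
  ultimately show False
    using no_four_neighbours[of u1 u2 u3 u4 w] \<open>Q \<inter> R = {}\<close> by auto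
qed

lemma exists_C4_isolating_card_le_1:
  assumes "card V \<le> 9" "connected_graph V E"
  shows "\<exists>D. C4_isolating V E D \<and> card D \<le> 1"
proof (rule ccontr)
  assume none: "\<not> ?thesis"
  have far: "contains_C4 (V - closed_nbhd V E {v}) E" if "v \<in> V" for v
    using none that unfolding C4_isolating_def by force
  have "contains_C4 V E"
    using none unfolding C4_isolating_def closed_nbhd_def by force
  then obtain Q where Q: "Q \<subseteq> V" "C4_on E Q"
    unfolding contains_C4_iff_C4_on by blast
  then obtain q where q: "q \<in> Q"
    using C4_on_card by fastforce
  obtain R where R: "R \<subseteq> V - closed_nbhd V E {q} - Q" "C4_on E R"
    using contains_C4_outside_closed_nbhd_Diff[OF Q(2) q far] Q(1) q
    unfolding contains_C4_iff_C4_on by blast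
  have QR: "finite Q" "card Q = 4" "finite R" "card R = 4" "Q \<inter> R = {}"
    using C4_on_card Q(2) R by blast+
  then obtain r where r: "r \<in> R"
    by fastforce
  have "card (Q \<union> R) = 8" "Q \<union> R \<subseteq> V"
    using QR Q(1) R(1) by (auto simp: card_Un_disjoint)
  then obtain w where cover: "V \<subseteq> Q \<union> R \<union> {w}"
    using subset_Un_singleton_if_card_le_Suc[OF finite_vertices] assms(1) by force
  have no_edge: "\<forall>x\<in>Q. \<forall>y\<in>R. \<not> E x y"
    using no_edge_between_C4s[OF far Q(2) R(2) QR(5) cover] by blast
  have "q \<in> Q \<inter> V" "r \<in> R \<inter> V"
    using q r Q(1) R(1) by auto
  then obtain a b where ab: "a \<in> Q" "b \<in> R" "E a w" "E w b"
    using cut_vertex_has_neighbours_on_both_sides[OF assms(2) cover QR(5) _ _ no_edge] by blast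
  have "E w a" "w \<in> V"
    using sympD[OF symp_edges ab(3)] edge_in_vertices[OF ab(4)] by auto
  have "\<not> contains_C4 (V - closed_nbhd V E {w}) E"
    using no_C4_outside_closed_nbhd_of_cut_vertex[OF cover QR(1) _ QR(3) _ ab(1,2) \<open>E w a\<close> ab(4)
        no_edge] QR(2,4) by simp
  then show False
    using far[OF \<open>w \<in> V\<close>] by contradiction
qed

end

theorem lemma4:
  fixes V :: "'a set" and E :: "'a \<Rightarrow> 'a \<Rightarrow> bool"
  assumes "simple_graph V E"
    and "card V \<le> 9"
    and "connected_graph V E"
    and "max_degree_le V E 3"
    and "\<not> graph_iso V E {1..4::nat} C4_edges"
    and "\<not> graph_iso V E {1..4::nat} diamond_edges"
    and "\<not> graph_iso V E {1..4::nat} K4_edges"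
  shows "iota_C4 V E \<le> 1"
proof -
  interpret subcubic_graph V E
    using assms(1,4) by unfold_locales
  obtain D where "C4_isolating V E D" "card D \<le> 1"
    using exists_C4_isolating_card_le_1 assms(2,3) by blast
  then show ?thesis
    using iota_C4_le order_trans by blast
qed

end
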